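(* Let $X$ be a $p$-operator space. Then there exist an index set $I$ and a $p$-complete isometry $\Phi:X'\to\mathcal B(\ell_p(I))$.
   Context: Let $1<p<\infty$. $\mathbb M_{n,m}=\mathcal B(\ell_p^m,\ell_p^n)$ with operator norm, $\mathbb M_n=\mathcal B(\ell_p^n)$. A $p$-operator space is a Banach space $X$ with norms $\|\cdot\|_n$ on $\mathbb M_n(X)$ satisfying $\|u\oplus v\|_{n+m}=\max(\|u\|_n,\|v\|_m)$ and $\|\alpha u\beta\|_n\le\|\alpha\|\|u\|_m\|\beta\|$ for $u\in\mathbb M_m(X)$, $\alpha\in\mathbb M_{n,m}$, $\beta\in\mathbb M_{m,n}$. The dual $X'$ has matrix norms given by $\mathbb M_n(X')=\mathcal{CB}_p(X,\mathbb M_n)$: for $\mu\in\mathbb M_n(X')$, $\|\mu\|_n=\sup\{\|(\mu_{kl}(x_{ij}))\|_{\mathbb M_{nm}}:m,x\in\mathbb M_m(X),\|x\|_m\le1\}$. $\mathcal B(\ell_p(I))$ has matrix norms from $\mathbb M_n(\mathcal B(\ell_p(I)))\subseteq\mathcal B(\ell_p^n\otimes_p\ell_p(I))$. A $p$-complete isometry is a linear map all of whose entrywise amplifications are isometries. *)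

theory Defs
  imports "HOL-Analysis.Analysis"
begin

(* Complex Banach space structure on a real Banach space type 'a, given by a
   complex scalar multiplication smul compatible with the real one and the norm. *)
definition complex_banach :: "(complex \<Rightarrow> 'a::banach \<Rightarrow> 'a) \<Rightarrow> bool" where
  "complex_banach smul \<longleftrightarrow>
     (\<forall>a b x. smul (a + b) x = smul a x + smul b x) \<and>
     (\<forall>a x y. smul a (x + y) = smul a x + smul a y) \<and>
     (\<forall>a b x. smul (a * b) x = smul a (smul b x)) \<and>
     (\<forall>r x. smul (complex_of_real r) x = r *\<^sub>R x) \<and>
     (\<forall>a x. norm (smul a x) = cmod a * norm x)"

definition mats :: "nat \<Rightarrow> nat \<Rightarrow> (nat \<Rightarrow> nat \<Rightarrow> 'z::zero) set" where
  "mats n m = {u. \<forall>i j. \<not> (i < n \<and> j < m) \<longrightarrow> u i j = 0}"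

definition pnorm :: "real \<Rightarrow> 'r set \<Rightarrow> ('r \<Rightarrow> complex) \<Rightarrow> real" where
  "pnorm p A x = (\<Sum>i\<in>A. cmod (x i) powr p) powr (1 / p)"

definition opn :: "real \<Rightarrow> 'r set \<Rightarrow> 'c set \<Rightarrow> ('r \<Rightarrow> 'c \<Rightarrow> complex) \<Rightarrow> real" where
  "opn p A B \<alpha> = Sup {pnorm p A (\<lambda>i. \<Sum>j\<in>B. \<alpha> i j * x j) | x. pnorm p B x \<le> 1}"

definition mmul :: "(complex \<Rightarrow> 'a \<Rightarrow> 'a) \<Rightarrow> nat \<Rightarrow> nat \<Rightarrow> (nat \<Rightarrow> nat \<Rightarrow> complex)
    \<Rightarrow> (nat \<Rightarrow> nat \<Rightarrow> 'a::banach) \<Rightarrow> (nat \<Rightarrow> nat \<Rightarrow> complex) \<Rightarrow> nat \<Rightarrow> nat \<Rightarrow> 'a" where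
  "mmul smul n m \<alpha> u \<beta> i j =
     (if i < n \<and> j < n then (\<Sum>k<m. \<Sum>l<m. smul (\<alpha> i k * \<beta> l j) (u k l)) else 0)"

definition dsum :: "nat \<Rightarrow> nat \<Rightarrow> (nat \<Rightarrow> nat \<Rightarrow> 'a::zero) \<Rightarrow> (nat \<Rightarrow> nat \<Rightarrow> 'a) \<Rightarrow> nat \<Rightarrow> nat \<Rightarrow> 'a" where
  "dsum n m u v i j =
     (if i < n \<and> j < n then u i j
      else if n \<le> i \<and> i < n + m \<and> n \<le> j \<and> j < n + m then v (i - n) (j - n) else 0)"

(* p-operator space structure: N n is the norm on M_n(X) *)
definition p_operator_space :: "real \<Rightarrow> (complex \<Rightarrow> 'a::banach \<Rightarrow> 'a)
    \<Rightarrow> (nat \<Rightarrow> (nat \<Rightarrow> nat \<Rightarrow> 'a) \<Rightarrow> real) \<Rightarrow> bool" where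
  "p_operator_space p smul N \<longleftrightarrow>
     complex_banach smul \<and>
     (\<forall>n. \<forall>u\<in>mats n n. 0 \<le> N n u \<and> (N n u = 0 \<longleftrightarrow> u = (\<lambda>i j. 0))) \<and>
     (\<forall>n. \<forall>u\<in>mats n n. \<forall>v\<in>mats n n. N n (\<lambda>i j. u i j + v i j) \<le> N n u + N n v) \<and>
     (\<forall>n c. \<forall>u\<in>mats n n. N n (\<lambda>i j. smul c (u i j)) = cmod c * N n u) \<and>
     (\<forall>u\<in>mats 1 1. N 1 u = norm (u 0 0)) \<and>
     (\<forall>n m. \<forall>u\<in>mats n n. \<forall>v\<in>mats m m. N (n + m) (dsum n m u v) = max (N n u) (N m v)) \<and>
     (\<forall>n m \<alpha> \<beta>. \<forall>u\<in>mats m m.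
        N n (mmul smul n m \<alpha> u \<beta>) \<le> opn p {..<n} {..<m} \<alpha> * N m u * opn p {..<m} {..<n} \<beta>)"

definition dual_space :: "(complex \<Rightarrow> 'a::banach \<Rightarrow> 'a) \<Rightarrow> ('a \<Rightarrow> complex) set" where
  "dual_space smul = {f. (\<forall>x y. f (x + y) = f x + f y) \<and> (\<forall>c x. f (smul c x) = c * f x) \<and>
                         (\<exists>C. \<forall>x. cmod (f x) \<le> C * norm x)}"

(* matrix norms on M_n(X') = CB_p(X, M_n) *)
definition dual_mnorm :: "real \<Rightarrow> (nat \<Rightarrow> (nat \<Rightarrow> nat \<Rightarrow> 'a::banach) \<Rightarrow> real)
    \<Rightarrow> nat \<Rightarrow> (nat \<Rightarrow> nat \<Rightarrow> ('a \<Rightarrow> complex)) \<Rightarrow> real" where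
  "dual_mnorm p N n \<mu> = Sup {opn p ({..<n} \<times> {..<m}) ({..<n} \<times> {..<m})
        (\<lambda>(k, i) (l, j). \<mu> k l (x i j)) | m x. x \<in> mats m m \<and> N m x \<le> 1}"

definition lp_space :: "real \<Rightarrow> 'i set \<Rightarrow> ('i \<Rightarrow> complex) set" where
  "lp_space p I = {x. (\<forall>i. i \<notin> I \<longrightarrow> x i = 0) \<and> (\<lambda>i. cmod (x i) powr p) summable_on I}"

definition lp_norm :: "real \<Rightarrow> 'i set \<Rightarrow> ('i \<Rightarrow> complex) \<Rightarrow> real" where
  "lp_norm p I x = (\<Sum>\<^sub>\<infinity>i\<in>I. cmod (x i) powr p) powr (1 / p)"

(* T is an element of B(l_p(I)) (only its action on l_p(I) matters) *)
definition bounded_op :: "real \<Rightarrow> 'i set \<Rightarrow> (('i \<Rightarrow> complex) \<Rightarrow> ('i \<Rightarrow> complex)) \<Rightarrow> bool" where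
  "bounded_op p I T \<longleftrightarrow>
     (\<forall>x\<in>lp_space p I. T x \<in> lp_space p I) \<and>
     (\<forall>x\<in>lp_space p I. \<forall>y\<in>lp_space p I. T (\<lambda>i. x i + y i) = (\<lambda>i. T x i + T y i)) \<and>
     (\<forall>c. \<forall>x\<in>lp_space p I. T (\<lambda>i. c * x i) = (\<lambda>i. c * T x i)) \<and>
     (\<exists>C. \<forall>x\<in>lp_space p I. lp_norm p I (T x) \<le> C * lp_norm p I x)"

(* matrix norms on M_n(B(l_p(I))) \<subseteq> B(l_p^n \<otimes>_p l_p(I)) *)
definition op_mnorm :: "real \<Rightarrow> 'i set \<Rightarrow> nat
    \<Rightarrow> (nat \<Rightarrow> nat \<Rightarrow> (('i \<Rightarrow> complex) \<Rightarrow> ('i \<Rightarrow> complex))) \<Rightarrow> real" where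
  "op_mnorm p I n T = Sup {(\<Sum>k<n. lp_norm p I (\<lambda>i. \<Sum>l<n. T k l (x l) i) powr p) powr (1 / p) | x.
        (\<forall>l<n. x l \<in> lp_space p I) \<and> (\<Sum>l<n. lp_norm p I (x l) powr p) powr (1 / p) \<le> 1}"

type_synonym 'a idx = "nat \<times> (nat \<Rightarrow> nat \<Rightarrow> 'a) \<times> nat"

end

theory Submission
  imports Defs
begin

(* For a functional mu, Phi(mu) is the direct sum, over all m and all y in the unit ball of
   M_m(X), of the scalar matrices (mu(y_ij)) acting on l_p^m; it acts on l_p(I), where I is the
   disjoint union of the index sets {0..m-1}.  The n-th amplification of Phi at a matrix (mu_kl)
   of functionals is then the p-direct sum of the matrices (mu_kl(y_ij)) acting on
   l_p^n (x) l_p^m, and the norm of a p-direct sum is the supremum of the norms of its summands,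
   which is exactly the norm of (mu_kl) in M_n(X') = CB(X, M_n).
   That this supremum is finite (bounded functionals are completely bounded) follows by pairing
   (mu_kl(y_ij)) z with a norming vector of l_q: the pairing splits into terms mu_kl(a y b) with a
   row a and a column b of norm at most 1, and ||a y b|| <= ||y|| by the axioms of a
   p-operator space. *)

section \<open>Finite \<open>\<ell>\<^sub>p\<close>-norms and their duality\<close>

lemma powr_mono2_iff:
  fixes a b p :: real
  assumes "0 \<le> a" "0 \<le> b" "0 < p"
  shows "a powr p \<le> b powr p \<longleftrightarrow> a \<le> b"
  using assms by (meson not_le powr_less_mono2 powr_mono2 less_imp_le)

lemma powr_inverse_le_one_iff:
  fixes a p :: real
  assumes "0 \<le> a" "0 < p"
  shows "a powr (1 / p) \<le> 1 \<longleftrightarrow> a \<le> 1"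
  using powr_mono2_iff[of a 1 "1 / p"] assms by simp

lemma pnorm_nonneg: "0 \<le> pnorm p A x"
  by (simp add: pnorm_def)

lemma pnorm_powr: "0 < p \<Longrightarrow> pnorm p A x powr p = (\<Sum>i\<in>A. cmod (x i) powr p)"
  by (simp add: pnorm_def powr_powr sum_nonneg)

lemma pnorm_le_one_iff: "0 < p \<Longrightarrow> pnorm p A x \<le> 1 \<longleftrightarrow> (\<Sum>i\<in>A. cmod (x i) powr p) \<le> 1"
  unfolding pnorm_def by (rule powr_inverse_le_one_iff) (auto intro: sum_nonneg)

lemma pnorm_zero [simp]: "pnorm p A (\<lambda>i. 0) = 0"
  by (simp add: pnorm_def)

lemma pnorm_lessThan_1: "0 < p \<Longrightarrow> pnorm p {..<1} (x :: nat \<Rightarrow> complex) = cmod (x 0)"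
  by (simp add: pnorm_def powr_powr lessThan_Suc)

lemma pnorm_cmult:
  assumes "0 < p"
  shows "pnorm p A (\<lambda>i. c * x i) = cmod c * pnorm p A x"
proof -
  have "(\<Sum>i\<in>A. cmod (c * x i) powr p) = cmod c powr p * (\<Sum>i\<in>A. cmod (x i) powr p)"
    by (simp add: norm_mult powr_mult sum_distrib_left)
  then show ?thesis
    using assms by (simp add: pnorm_def powr_mult powr_powr sum_nonneg)
qed

lemma pnorm_eq_0_imp:
  assumes "0 < p" "finite A" "pnorm p A x = 0" "i \<in> A"
  shows "x i = 0"
proof -
  have "(\<Sum>i\<in>A. cmod (x i) powr p) = 0"
    using pnorm_powr[OF assms(1), of A x] assms(1,3) by simp
  then show ?thesis
    using assms(2,4) by (simp add: sum_nonneg_eq_0_iff)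
qed

lemma Hoelder_unit_ball:
  fixes w x :: "'i \<Rightarrow> real"
  assumes "1 < p" "\<And>i. 0 \<le> w i" "\<And>i. 0 \<le> x i"
    and "(\<Sum>i\<in>B. w i powr (p / (p - 1))) \<le> 1" "(\<Sum>i\<in>B. x i powr p) \<le> 1"
  shows "(\<Sum>i\<in>B. w i * x i) \<le> 1"
proof -
  define q where "q = p / (p - 1)"
  have q: "1 < q" "1 / q + 1 / p = 1"
    using assms(1) by (auto simp: q_def field_simps)
  have "(\<Sum>i\<in>B. w i * x i) \<le> (\<Sum>i\<in>B. w i powr q / q + x i powr p / p)"
    using assms q by (intro sum_mono Youngs_inequality) auto
  also have "\<dots> = (\<Sum>i\<in>B. w i powr q) / q + (\<Sum>i\<in>B. x i powr p) / p"
    by (simp add: sum.distrib sum_divide_distrib)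
  also have "\<dots> \<le> 1 / q + 1 / p"
    using assms q by (intro add_mono divide_right_mono) (auto simp: q_def)
  finally show ?thesis
    using q by simp
qed

lemma cnj_sgn_mult_self: "cnj (sgn z) * z = of_real (cmod z)"
proof (cases "z = 0")
  case False
  have "cnj z * z = of_real (cmod z) * of_real (cmod z)"
    by (metis complex_norm_square mult.commute of_real_mult power2_eq_square)
  then show ?thesis
    using False by (simp add: sgn_div_norm scaleR_conv_of_real mult.assoc)
qed simp

lemma norming_vector:
  assumes "1 < p"
  obtains w where "(\<Sum>i\<in>A. cmod (w i) powr (p / (p - 1))) \<le> 1"
    and "(\<Sum>i\<in>A. w i * v i) = of_real (pnorm p A v)"
proof (cases "pnorm p A v = 0")
  case True
  then show ?thesis
    by (intro that[of "\<lambda>i. 0"]) simp_all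
next
  case False
  define P where "P = pnorm p A v"
  have P: "0 < P"
    using False pnorm_nonneg[of p A v] by (simp add: P_def)
  have sum_v: "(\<Sum>i\<in>A. cmod (v i) powr p) = P powr p"
    using pnorm_powr[of p A v] assms by (simp add: P_def)
  define w where "w i = of_real (cmod (v i) powr (p - 1) / P powr (p - 1)) * cnj (sgn (v i))" for i
  have "w i * v i = of_real (cmod (v i) powr p / P powr (p - 1))" for i
  proof -
    have "cmod (v i) powr (p - 1) * cmod (v i) = cmod (v i) powr p"
      by (cases "v i = 0") (simp_all add: powr_add[of _ "p - 1" 1, simplified])
    then show ?thesis
      by (simp add: w_def mult.assoc cnj_sgn_mult_self flip: of_real_mult)
  qed
  then have "(\<Sum>i\<in>A. w i * v i) = of_real ((\<Sum>i\<in>A. cmod (v i) powr p) / P powr (p - 1))"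
    by (simp add: sum_divide_distrib)
  also have "(\<Sum>i\<in>A. cmod (v i) powr p) / P powr (p - 1) = P"
    using P by (simp add: sum_v powr_diff)
  finally have pairing: "(\<Sum>i\<in>A. w i * v i) = of_real (pnorm p A v)"
    by (simp add: P_def)
  have "cmod (w i) = cmod (v i) powr (p - 1) / P powr (p - 1)" for i
    by (cases "v i = 0") (simp_all add: w_def norm_mult norm_divide norm_sgn)
  then have "cmod (w i) powr (p / (p - 1)) = cmod (v i) powr p / P powr p" for i
    using P assms by (simp add: powr_divide powr_powr)
  then have "(\<Sum>i\<in>A. cmod (w i) powr (p / (p - 1))) = 1"
    using P by (simp add: sum_divide_distrib[symmetric] sum_v)
  then show ?thesis
    using pairing by (intro that[of w]) simp_all
qed

section \<open>Operator norms of scalar matrices\<close>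

text \<open>\<open>opn\<close> is a supremum of reals, so it says something only when the set of values is bounded:
  hence the hypothesis with a bound \<open>K\<close> in the following lemmas.\<close>

lemma opn_le:
  assumes "\<And>x. pnorm p B x \<le> 1 \<Longrightarrow> pnorm p A (\<lambda>i. \<Sum>j\<in>B. \<alpha> i j * x j) \<le> K"
  shows "opn p A B \<alpha> \<le> K"
  unfolding opn_def using assms by (intro cSup_least) (auto intro: exI[of _ "\<lambda>j. 0"])

lemma opn_upper:
  assumes "\<And>x. pnorm p B x \<le> 1 \<Longrightarrow> pnorm p A (\<lambda>i. \<Sum>j\<in>B. \<alpha> i j * x j) \<le> K"
    and "pnorm p B x \<le> 1"
  shows "pnorm p A (\<lambda>i. \<Sum>j\<in>B. \<alpha> i j * x j) \<le> opn p A B \<alpha>"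
  unfolding opn_def using assms by (intro cSup_upper) (auto simp: bdd_above_def)

lemma opn_nonneg:
  assumes "\<And>x. pnorm p B x \<le> 1 \<Longrightarrow> pnorm p A (\<lambda>i. \<Sum>j\<in>B. \<alpha> i j * x j) \<le> K"
  shows "0 \<le> opn p A B \<alpha>"
  using opn_upper[OF assms, of "\<lambda>j. 0"] by simp

lemma pnorm_mult_le_opn:
  assumes "0 < p" "finite B"
    and bound: "\<And>x. pnorm p B x \<le> 1 \<Longrightarrow> pnorm p A (\<lambda>i. \<Sum>j\<in>B. \<alpha> i j * x j) \<le> K"
  shows "pnorm p A (\<lambda>i. \<Sum>j\<in>B. \<alpha> i j * x j) \<le> opn p A B \<alpha> * pnorm p B x"
proof (cases "pnorm p B x = 0")
  case True
  then have "x j = 0" if "j \<in> B" for j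
    using pnorm_eq_0_imp[OF assms(1,2)] that by blast
  then show ?thesis
    using True by simp
next
  case False
  define c where "c = pnorm p B x"
  have c: "0 < c"
    using False pnorm_nonneg[of p B x] by (simp add: c_def)
  have "pnorm p B (\<lambda>j. of_real (1 / c) * x j) \<le> 1"
    using c pnorm_cmult[OF assms(1), of B "of_real (1 / c)" x] by (simp add: c_def norm_divide)
  then have "pnorm p A (\<lambda>i. \<Sum>j\<in>B. \<alpha> i j * (of_real (1 / c) * x j)) \<le> opn p A B \<alpha>"
    using opn_upper[OF bound] by blast
  also have "(\<lambda>i. \<Sum>j\<in>B. \<alpha> i j * (of_real (1 / c) * x j))
      = (\<lambda>i. of_real (1 / c) * (\<Sum>j\<in>B. \<alpha> i j * x j))"
    by (simp add: sum_distrib_left ac_simps)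
  finally have "1 / c * pnorm p A (\<lambda>i. \<Sum>j\<in>B. \<alpha> i j * x j) \<le> opn p A B \<alpha>"
    using c by (simp only: pnorm_cmult[OF assms(1)] norm_of_real) simp
  then show ?thesis
    using c by (simp add: c_def field_simps)
qed

lemma opn_row:
  assumes "1 < p" "(\<Sum>j\<in>B. cmod (a j) powr (p / (p - 1))) \<le> 1"
  shows "opn p {..<1::nat} B (\<lambda>_ j. a j) \<le> 1" "0 \<le> opn p {..<1::nat} B (\<lambda>_ j. a j)"
proof -
  have bound: "pnorm p {..<1::nat} (\<lambda>i. \<Sum>j\<in>B. a j * x j) \<le> 1" if "pnorm p B x \<le> 1" for x
  proof -
    have "pnorm p {..<1::nat} (\<lambda>i. \<Sum>j\<in>B. a j * x j) = cmod (\<Sum>j\<in>B. a j * x j)"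
      using assms(1) by (subst pnorm_lessThan_1) auto
    also have "\<dots> \<le> (\<Sum>j\<in>B. cmod (a j) * cmod (x j))"
      using norm_sum[of "\<lambda>j. a j * x j" B] by (simp add: norm_mult)
    also have "\<dots> \<le> 1"
      using assms that pnorm_le_one_iff[of p B x] by (intro Hoelder_unit_ball) auto
    finally show ?thesis .
  qed
  from opn_le[OF bound] opn_nonneg[OF bound]
  show "opn p {..<1::nat} B (\<lambda>_ j. a j) \<le> 1" "0 \<le> opn p {..<1::nat} B (\<lambda>_ j. a j)"
    by auto
qed

lemma opn_column:
  assumes "0 < p"
  shows "opn p A {..<1::nat} (\<lambda>i _. z i) \<le> pnorm p A z" "0 \<le> opn p A {..<1::nat} (\<lambda>i _. z i)"
proof -
  have bound: "pnorm p A (\<lambda>i. \<Sum>j\<in>{..<1::nat}. z i * x j) \<le> pnorm p A z"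
    if "pnorm p {..<1::nat} x \<le> 1" for x
  proof -
    have "pnorm p A (\<lambda>i. \<Sum>j\<in>{..<1::nat}. z i * x j) = cmod (x 0) * pnorm p A z"
      using pnorm_cmult[OF assms, of A "x 0" z] by (simp add: mult.commute)
    also have "\<dots> \<le> pnorm p A z"
      using that pnorm_lessThan_1[OF assms, of x] by (simp add: mult_left_le_one_le pnorm_nonneg)
    finally show ?thesis .
  qed
  from opn_le[OF bound] opn_nonneg[OF bound]
  show "opn p A {..<1::nat} (\<lambda>i _. z i) \<le> pnorm p A z" "0 \<le> opn p A {..<1::nat} (\<lambda>i _. z i)"
    by auto
qed

section \<open>Bounded functionals are completely bounded\<close>

lemma p_operator_space_norm_1:
  "p_operator_space p smul N \<Longrightarrow> u \<in> mats 1 1 \<Longrightarrow> N 1 u = norm (u 0 0)"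
  unfolding p_operator_space_def by blast

lemma p_operator_space_nonneg: "p_operator_space p smul N \<Longrightarrow> u \<in> mats n n \<Longrightarrow> 0 \<le> N n u"
  unfolding p_operator_space_def by blast

lemma p_operator_space_zero: "p_operator_space p smul N \<Longrightarrow> N n (\<lambda>i j. 0) = 0"
  unfolding p_operator_space_def mats_def by auto

lemma p_operator_space_mmul:
  "p_operator_space p smul N \<Longrightarrow> u \<in> mats m m \<Longrightarrow>
   N n (mmul smul n m \<alpha> u \<beta>) \<le> opn p {..<n} {..<m} \<alpha> * N m u * opn p {..<m} {..<n} \<beta>"
  unfolding p_operator_space_def by blast

lemma dual_space_sum:
  assumes "\<mu> \<in> dual_space smul"
  shows "\<mu> (sum f S) = (\<Sum>s\<in>S. \<mu> (f s))"
proof -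
  have add: "\<mu> (x + y) = \<mu> x + \<mu> y" for x y
    using assms by (simp add: dual_space_def)
  then have "\<mu> 0 = 0"
    by (metis add_cancel_right_right add_0)
  with add show ?thesis
    by (induction S rule: infinite_finite_induct) simp_all
qed

lemma dual_space_smul: "\<mu> \<in> dual_space smul \<Longrightarrow> \<mu> (smul c x) = c * \<mu> x"
  by (simp add: dual_space_def)

lemma dual_space_bounded:
  assumes "\<mu> \<in> dual_space smul"
  obtains C where "0 \<le> C" "\<And>x. cmod (\<mu> x) \<le> C * norm x"
proof -
  obtain C where "\<And>x. cmod (\<mu> x) \<le> C * norm x"
    using assms by (auto simp: dual_space_def)
  then have "cmod (\<mu> x) \<le> max C 0 * norm x" for x
    by (metis max.cobounded1 mult_right_mono norm_ge_zero order_trans)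
  then show ?thesis
    using that[of "max C 0"] by simp
qed

lemma norm_row_mmul_column_le:
  fixes smul :: "complex \<Rightarrow> 'a::banach \<Rightarrow> 'a"
  assumes p: "1 < p" and X: "p_operator_space p smul N" and y: "y \<in> mats m m" "N m y \<le> 1"
    and a: "(\<Sum>j<m. cmod (a j) powr (p / (p - 1))) \<le> 1"
    and z: "(\<Sum>j<m. cmod (z j) powr p) \<le> 1"
  shows "norm (\<Sum>i<m. \<Sum>j<m. smul (a i * z j) (y i j)) \<le> 1"
proof -
  let ?row = "\<lambda>(_::nat) j. a j" and ?column = "\<lambda>i (_::nat). z i"
  have "norm (\<Sum>i<m. \<Sum>j<m. smul (a i * z j) (y i j)) = N 1 (mmul smul 1 m ?row y ?column)"
    using p_operator_space_norm_1[OF X] by (simp add: mats_def mmul_def)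
  also have "\<dots> \<le> opn p {..<1} {..<m} ?row * N m y * opn p {..<m} {..<1} ?column"
    by (rule p_operator_space_mmul[OF X y(1)])
  also have "\<dots> \<le> 1"
  proof -
    have "pnorm p {..<m} z \<le> 1"
      using p z by (simp add: pnorm_le_one_iff)
    then have "opn p {..<m} {..<1} ?column \<le> 1"
      using opn_column(1)[of p "{..<m}" z] p by simp
    then show ?thesis
      using opn_row[OF p a] opn_column(2)[of p "{..<m}" z] p y
        p_operator_space_nonneg[OF X y(1)] by (intro mult_le_one) auto
  qed
  finally show ?thesis .
qed

lemma sum_section_le_sum_product:
  fixes f :: "'a \<times> 'b \<Rightarrow> real"
  assumes "finite A" "finite B" "k \<in> A" "\<And>r. 0 \<le> f r"
  shows "(\<Sum>b\<in>B. f (k, b)) \<le> (\<Sum>r\<in>A \<times> B. f r)"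
proof -
  have "(\<Sum>b\<in>B. f (k, b)) \<le> (\<Sum>a\<in>A. \<Sum>b\<in>B. f (a, b))"
    using assms by (intro member_le_sum[where f = "\<lambda>a. \<Sum>b\<in>B. f (a, b)"]) (auto intro: sum_nonneg)
  then show ?thesis
    by (simp add: sum.cartesian_product)
qed

definition unit_balls :: "(nat \<Rightarrow> (nat \<Rightarrow> nat \<Rightarrow> 'a::zero) \<Rightarrow> real)
    \<Rightarrow> (nat \<times> (nat \<Rightarrow> nat \<Rightarrow> 'a)) set" where
  "unit_balls N = {(m, y). y \<in> mats m m \<and> N m y \<le> 1}"

lemma zero_in_unit_balls: "p_operator_space p smul N \<Longrightarrow> (0, \<lambda>i j. 0) \<in> unit_balls N"
  by (simp add: unit_balls_def mats_def p_operator_space_zero)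

text \<open>\<open>pairing_matrix \<mu> y\<close> is \<open>\<mu>\<^sub>m(y) \<in> M\<^sub>n(M\<^sub>m) = M\<^sub>n\<^sub>m\<close>, the image of \<open>y \<in> M\<^sub>m(X)\<close>
  under \<open>\<mu> \<in> M\<^sub>n(X') = CB(X, M\<^sub>n)\<close>.\<close>

definition pairing_matrix :: "(nat \<Rightarrow> nat \<Rightarrow> 'a \<Rightarrow> complex) \<Rightarrow> (nat \<Rightarrow> nat \<Rightarrow> 'a)
    \<Rightarrow> nat \<times> nat \<Rightarrow> nat \<times> nat \<Rightarrow> complex" where
  "pairing_matrix \<mu> y = (\<lambda>(k, i) (l, j). \<mu> k l (y i j))"

lemma dual_mnorm_pairing_matrix:
  "dual_mnorm p N n \<mu> =
     Sup {opn p ({..<n} \<times> {..<m}) ({..<n} \<times> {..<m}) (pairing_matrix \<mu> y) | m y.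
            (m, y) \<in> unit_balls N}"
  by (simp add: dual_mnorm_def pairing_matrix_def unit_balls_def)

lemma pairing_with_pairing_matrix:
  assumes \<mu>: "\<And>k l. k < n \<Longrightarrow> l < n \<Longrightarrow> \<mu> k l \<in> dual_space smul"
  shows "(\<Sum>r\<in>{..<n} \<times> {..<m}. w r * (\<Sum>s\<in>{..<n} \<times> {..<m}. pairing_matrix \<mu> y r s * z s))
           = (\<Sum>k<n. \<Sum>l<n. \<mu> k l (\<Sum>i<m. \<Sum>j<m. smul (w (k, i) * z (l, j)) (y i j)))"
proof -
  have "(\<Sum>r\<in>{..<n} \<times> {..<m}. w r * (\<Sum>s\<in>{..<n} \<times> {..<m}. pairing_matrix \<mu> y r s * z s))
      = (\<Sum>k<n. \<Sum>i<m. \<Sum>l<n. \<Sum>j<m. w (k, i) * z (l, j) * \<mu> k l (y i j))"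
    by (simp add: pairing_matrix_def sum.cartesian_product' sum_distrib_left ac_simps)
  also have "\<dots> = (\<Sum>k<n. \<Sum>l<n. \<Sum>i<m. \<Sum>j<m. w (k, i) * z (l, j) * \<mu> k l (y i j))"
    by (intro sum.cong refl sum.swap)
  also have "\<dots> = (\<Sum>k<n. \<Sum>l<n. \<mu> k l (\<Sum>i<m. \<Sum>j<m. smul (w (k, i) * z (l, j)) (y i j)))"
  proof (intro sum.cong refl)
    fix k l
    assume "k \<in> {..<n}" "l \<in> {..<n}"
    then have "\<mu> k l \<in> dual_space smul"
      using \<mu> by simp
    then show "(\<Sum>i<m. \<Sum>j<m. w (k, i) * z (l, j) * \<mu> k l (y i j))
        = \<mu> k l (\<Sum>i<m. \<Sum>j<m. smul (w (k, i) * z (l, j)) (y i j))"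
      by (simp add: dual_space_sum dual_space_smul)
  qed
  finally show ?thesis .
qed

lemma pnorm_pairing_matrix_le:
  fixes smul :: "complex \<Rightarrow> 'a::banach \<Rightarrow> 'a" and \<mu> :: "nat \<Rightarrow> nat \<Rightarrow> 'a \<Rightarrow> complex"
  assumes p: "1 < p" and X: "p_operator_space p smul N"
    and \<mu>: "\<And>k l. k < n \<Longrightarrow> l < n \<Longrightarrow> \<mu> k l \<in> dual_space smul"
    and c: "\<And>k l x. k < n \<Longrightarrow> l < n \<Longrightarrow> cmod (\<mu> k l x) \<le> c k l * norm x"
    and c_nonneg: "\<And>k l. k < n \<Longrightarrow> l < n \<Longrightarrow> 0 \<le> c k l"
    and y: "y \<in> mats m m" "N m y \<le> 1"
    and z: "pnorm p ({..<n} \<times> {..<m}) z \<le> 1"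
  shows "pnorm p ({..<n} \<times> {..<m}) (\<lambda>r. \<Sum>s\<in>{..<n} \<times> {..<m}. pairing_matrix \<mu> y r s * z s)
           \<le> (\<Sum>k<n. \<Sum>l<n. c k l)"
proof -
  define A where "A = {..<n} \<times> {..<m}"
  define v where "v = (\<lambda>r. \<Sum>s\<in>A. pairing_matrix \<mu> y r s * z s)"
  obtain w where w: "(\<Sum>r\<in>A. cmod (w r) powr (p / (p - 1))) \<le> 1"
    and w_v: "(\<Sum>r\<in>A. w r * v r) = of_real (pnorm p A v)"
    using norming_vector[OF p] by blast
  define E where "E k l = (\<Sum>i<m. \<Sum>j<m. smul (w (k, i) * z (l, j)) (y i j))" for k l
  have pairing: "pnorm p A v = cmod (\<Sum>k<n. \<Sum>l<n. \<mu> k l (E k l))"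
    using w_v pairing_with_pairing_matrix[OF \<mu>, where m = m and w = w and y = y and z = z]
      pnorm_nonneg[of p A v]
    by (simp add: A_def v_def E_def)
  text \<open>The rows \<open>w\<^sub>k\<close> of \<open>w\<close> and the columns \<open>z\<^sub>l\<close> of \<open>z\<close> lie in the unit balls of \<open>\<ell>\<^sub>q\<^sup>m\<close>
    and \<open>\<ell>\<^sub>p\<^sup>m\<close>, so \<open>E k l = w\<^sub>k y z\<^sub>l\<close> has norm at most \<open>1\<close>.\<close>
  have "norm (E k l) \<le> 1" if "k < n" "l < n" for k l
    unfolding E_def
  proof (rule norm_row_mmul_column_le[OF p X y])
    have "(\<Sum>r\<in>A. cmod (z r) powr p) \<le> 1"
      using p z by (simp add: A_def pnorm_le_one_iff)
    then show "(\<Sum>j<m. cmod (z (l, j)) powr p) \<le> 1"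
      using sum_section_le_sum_product[of "{..<n}" "{..<m}" l "\<lambda>r. cmod (z r) powr p"] that
      by (simp add: A_def)
    show "(\<Sum>j<m. cmod (w (k, j)) powr (p / (p - 1))) \<le> 1"
      using sum_section_le_sum_product[of "{..<n}" "{..<m}" k "\<lambda>r. cmod (w r) powr (p / (p - 1))"]
        w that
      by (simp add: A_def)
  qed
  then have "cmod (\<mu> k l (E k l)) \<le> c k l" if "k < n" "l < n" for k l
    using c[OF that, of "E k l"] c_nonneg[OF that] that
    by (meson mult_left_le order_trans)
  then have "cmod (\<Sum>k<n. \<Sum>l<n. \<mu> k l (E k l)) \<le> (\<Sum>k<n. \<Sum>l<n. c k l)"
    by (intro order_trans[OF norm_sum] sum_mono order_trans[OF norm_sum]) auto
  then show ?thesis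
    using pairing by (simp add: A_def v_def)
qed

lemma pairing_matrix_bounded:
  fixes smul :: "complex \<Rightarrow> 'a::banach \<Rightarrow> 'a" and \<mu> :: "nat \<Rightarrow> nat \<Rightarrow> 'a \<Rightarrow> complex"
  assumes p: "1 < p" and X: "p_operator_space p smul N"
    and \<mu>: "\<forall>k<n. \<forall>l<n. \<mu> k l \<in> dual_space smul"
  obtains K where "\<And>m y z. (m, y) \<in> unit_balls N \<Longrightarrow> pnorm p ({..<n} \<times> {..<m}) z \<le> 1 \<Longrightarrow>
    pnorm p ({..<n} \<times> {..<m}) (\<lambda>r. \<Sum>s\<in>{..<n} \<times> {..<m}. pairing_matrix \<mu> y r s * z s) \<le> K"
proof -
  have "\<forall>k l. \<exists>C. k < n \<longrightarrow> l < n \<longrightarrow> 0 \<le> C \<and> (\<forall>x. cmod (\<mu> k l x) \<le> C * norm x)"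
    using \<mu> dual_space_bounded by metis
  then obtain c where c: "\<And>k l. k < n \<Longrightarrow> l < n \<Longrightarrow> 0 \<le> c k l \<and> (\<forall>x. cmod (\<mu> k l x) \<le> c k l * norm x)"
    by metis
  show ?thesis
  proof (rule that)
    fix m y z
    assume "(m, y) \<in> unit_balls N" "pnorm p ({..<n} \<times> {..<m}) z \<le> 1"
    with c \<mu> show "pnorm p ({..<n} \<times> {..<m}) (\<lambda>r. \<Sum>s\<in>{..<n} \<times> {..<m}. pairing_matrix \<mu> y r s * z s)
        \<le> (\<Sum>k<n. \<Sum>l<n. c k l)"
      by (intro pnorm_pairing_matrix_le[OF p X]) (auto simp: unit_balls_def)
  qed
qed

lemma opn_pairing_matrix:
  fixes smul :: "complex \<Rightarrow> 'a::banach \<Rightarrow> 'a" and \<mu> :: "nat \<Rightarrow> nat \<Rightarrow> 'a \<Rightarrow> complex"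
  assumes p: "1 < p" and X: "p_operator_space p smul N"
    and \<mu>: "\<forall>k<n. \<forall>l<n. \<mu> k l \<in> dual_space smul" and y: "(m, y) \<in> unit_balls N"
  defines "A \<equiv> {..<n} \<times> {..<m}"
  shows "0 \<le> opn p A A (pairing_matrix \<mu> y)"
    and "opn p A A (pairing_matrix \<mu> y) \<le> dual_mnorm p N n \<mu>"
    and "pnorm p A (\<lambda>r. \<Sum>s\<in>A. pairing_matrix \<mu> y r s * z s)
           \<le> opn p A A (pairing_matrix \<mu> y) * pnorm p A z"
proof -
  obtain K where K: "\<And>m y z. (m, y) \<in> unit_balls N \<Longrightarrow> pnorm p ({..<n} \<times> {..<m}) z \<le> 1 \<Longrightarrow>
    pnorm p ({..<n} \<times> {..<m}) (\<lambda>r. \<Sum>s\<in>{..<n} \<times> {..<m}. pairing_matrix \<mu> y r s * z s) \<le> K"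
    using pairing_matrix_bounded[OF p X \<mu>] by blast
  show "0 \<le> opn p A A (pairing_matrix \<mu> y)"
    unfolding A_def using K[OF y] by (rule opn_nonneg)
  show "pnorm p A (\<lambda>r. \<Sum>s\<in>A. pairing_matrix \<mu> y r s * z s)
      \<le> opn p A A (pairing_matrix \<mu> y) * pnorm p A z"
    unfolding A_def using p by (intro pnorm_mult_le_opn[OF _ _ K[OF y]]) auto
  have "opn p ({..<n} \<times> {..<m'}) ({..<n} \<times> {..<m'}) (pairing_matrix \<mu> y') \<le> K"
    if "(m', y') \<in> unit_balls N" for m' y'
    using K[OF that] by (rule opn_le)
  then have "bdd_above
      {opn p ({..<n} \<times> {..<m}) ({..<n} \<times> {..<m}) (pairing_matrix \<mu> y) | m y. (m, y) \<in> unit_balls N}"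
    by (intro bdd_aboveI[where M = K]) blast
  then show "opn p A A (pairing_matrix \<mu> y) \<le> dual_mnorm p N n \<mu>"
    unfolding dual_mnorm_pairing_matrix A_def using y by (intro cSup_upper) auto
qed

lemma dual_mnorm_nonneg:
  fixes smul :: "complex \<Rightarrow> 'a::banach \<Rightarrow> 'a"
  assumes "1 < p" "p_operator_space p smul N" "\<forall>k<n. \<forall>l<n. \<mu> k l \<in> dual_space smul"
  shows "0 \<le> dual_mnorm p N n \<mu>"
  using opn_pairing_matrix(1,2)[OF assms zero_in_unit_balls[OF assms(2)]] by linarith

lemma pairing_matrix_action_le:
  fixes smul :: "complex \<Rightarrow> 'a::banach \<Rightarrow> 'a" and \<mu> :: "nat \<Rightarrow> nat \<Rightarrow> 'a \<Rightarrow> complex"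
  assumes p: "1 < p" and X: "p_operator_space p smul N"
    and \<mu>: "\<forall>k<n. \<forall>l<n. \<mu> k l \<in> dual_space smul" and y: "(m, y) \<in> unit_balls N"
  shows "(\<Sum>k<n. \<Sum>i<m. cmod (\<Sum>l<n. \<Sum>j<m. \<mu> k l (y i j) * z l j) powr p)
           \<le> dual_mnorm p N n \<mu> powr p * (\<Sum>l<n. \<Sum>j<m. cmod (z l j) powr p)"
proof -
  define A where "A = {..<n} \<times> {..<m}"
  define Z where "Z = (\<lambda>(l, j). z l j)"
  let ?S = "dual_mnorm p N n \<mu>"
  note opn = opn_pairing_matrix[OF p X \<mu> y, folded A_def]
  have le: "pnorm p A (\<lambda>r. \<Sum>s\<in>A. pairing_matrix \<mu> y r s * Z s) \<le> ?S * pnorm p A Z"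
    using opn(3)[of Z] mult_right_mono[OF opn(2) pnorm_nonneg, of p A Z] by linarith
  have "pnorm p A (\<lambda>r. \<Sum>s\<in>A. pairing_matrix \<mu> y r s * Z s) powr p \<le> (?S * pnorm p A Z) powr p"
    by (rule powr_mono2[OF _ pnorm_nonneg le]) (use p in simp)
  also have "\<dots> = ?S powr p * pnorm p A Z powr p"
    using opn(1,2) by (simp add: powr_mult pnorm_nonneg)
  finally have "(\<Sum>r\<in>A. cmod (\<Sum>s\<in>A. pairing_matrix \<mu> y r s * Z s) powr p)
      \<le> ?S powr p * (\<Sum>r\<in>A. cmod (Z r) powr p)"
    using p by (simp only: pnorm_powr)
  then show ?thesis
    by (simp add: A_def Z_def pairing_matrix_def sum.cartesian_product')
qed

section \<open>Sums over blocks\<close>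

definition block_index :: "(nat \<times> 'b) set \<Rightarrow> (nat \<times> 'b \<times> nat) set" where
  "block_index B = {(m, y, i). (m, y) \<in> B \<and> i < m}"

lemma block_index_mono: "B \<subseteq> B' \<Longrightarrow> block_index B \<subseteq> block_index B'"
  by (auto simp: block_index_def)

lemma sum_block_index:
  assumes "finite G"
  shows "finite (block_index G)" "sum f (block_index G) = (\<Sum>(m, y)\<in>G. \<Sum>i<m. f (m, y, i))"
proof -
  have eq: "block_index G = (\<Union>(m, y)\<in>G. (\<lambda>i. (m, y, i)) ` {..<m})"
    by (auto simp: block_index_def)
  show "finite (block_index G)"
    unfolding eq using assms by auto
  have "sum f (block_index G) = (\<Sum>(m, y)\<in>G. sum f ((\<lambda>i. (m, y, i)) ` {..<m}))"
    unfolding eq using assms by (subst sum.UNION_disjoint) (auto simp: split_def)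
  also have "\<dots> = (\<Sum>(m, y)\<in>G. \<Sum>i<m. f (m, y, i))"
    by (intro sum.cong refl) (auto simp: sum.reindex inj_on_def)
  finally show "sum f (block_index G) = (\<Sum>(m, y)\<in>G. \<Sum>i<m. f (m, y, i))" .
qed

lemma summable_on_block_index_le:
  fixes g h :: "nat \<times> 'b \<times> nat \<Rightarrow> real"
  assumes g: "\<And>t. t \<in> block_index B \<Longrightarrow> 0 \<le> g t" and h: "\<And>t. t \<in> block_index B \<Longrightarrow> 0 \<le> h t"
    and h_summable: "h summable_on block_index B"
    and blocks: "\<And>m y. (m, y) \<in> B \<Longrightarrow> (\<Sum>i<m. g (m, y, i)) \<le> (\<Sum>i<m. h (m, y, i))"
  shows "g summable_on block_index B" "infsum g (block_index B) \<le> infsum h (block_index B)"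
proof -
  have finite_le: "sum g F \<le> infsum h (block_index B)" if F: "finite F" "F \<subseteq> block_index B" for F
  proof -
    text \<open>\<open>F\<close> lies in the union of the finitely many full blocks it meets.\<close>
    define G where "G = (\<lambda>(m, y, i). (m, y)) ` F"
    have G: "finite G" "G \<subseteq> B"
      using F by (auto simp: G_def block_index_def)
    have F_G: "F \<subseteq> block_index G"
      using F(2) by (force simp: G_def block_index_def image_iff)
    have "sum g F \<le> sum g (block_index G)"
      using F_G block_index_mono[OF G(2)] g sum_block_index(1)[OF G(1)] by (intro sum_mono2) auto
    also have "\<dots> \<le> sum h (block_index G)"
      unfolding sum_block_index(2)[OF G(1)] using G blocks by (intro sum_mono) auto
    also have "\<dots> \<le> infsum h (block_index B)"
      using block_index_mono[OF G(2)] sum_block_index(1)[OF G(1)] h h_summable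
      by (intro finite_sum_le_infsum) auto
    finally show ?thesis .
  qed
  show summable: "g summable_on block_index B"
    using g finite_le
    by (intro nonneg_bdd_above_summable_on bdd_aboveI[where M = "infsum h (block_index B)"]) auto
  show "infsum g (block_index B) \<le> infsum h (block_index B)"
    using summable finite_le by (rule infsum_le_finite_sums)
qed

lemma has_sum_sum:
  fixes f :: "'k \<Rightarrow> 't \<Rightarrow> 'v::topological_comm_monoid_add"
  assumes "finite K" "\<And>k. k \<in> K \<Longrightarrow> (f k has_sum s k) A"
  shows "((\<lambda>t. \<Sum>k\<in>K. f k t) has_sum (\<Sum>k\<in>K. s k)) A"
  using assms by (induction K rule: finite_induct) (auto intro: has_sum_add)

lemma lp_norm_nonneg: "0 \<le> lp_norm p I x"
  by (simp add: lp_norm_def)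

lemma lp_norm_powr: "0 < p \<Longrightarrow> lp_norm p I x powr p = infsum (\<lambda>i. cmod (x i) powr p) I"
  by (simp add: lp_norm_def powr_powr infsum_nonneg)

lemma lp_block_diagonal_bound:
  fixes x V :: "nat \<Rightarrow> nat \<times> 'b \<times> nat \<Rightarrow> complex"
  assumes p: "0 < p" and C: "0 \<le> C"
    and x: "\<forall>l<n. x l \<in> lp_space p (block_index B)"
    and V_outside: "\<And>k t. t \<notin> block_index B \<Longrightarrow> V k t = 0"
    and blocks: "\<And>m y. (m, y) \<in> B \<Longrightarrow> (\<Sum>k<n. \<Sum>i<m. cmod (V k (m, y, i)) powr p)
        \<le> C powr p * (\<Sum>l<n. \<Sum>j<m. cmod (x l (m, y, j)) powr p)"
  shows "\<forall>k<n. V k \<in> lp_space p (block_index B)"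
    and "(\<Sum>k<n. lp_norm p (block_index B) (V k) powr p)
           \<le> C powr p * (\<Sum>l<n. lp_norm p (block_index B) (x l) powr p)"
proof -
  let ?I = "block_index B"
  define g where "g k t = cmod (V k t) powr p" for k t
  define h where "h t = C powr p * (\<Sum>l<n. cmod (x l t) powr p)" for t
  have "((\<lambda>t. \<Sum>l<n. cmod (x l t) powr p) has_sum (\<Sum>l<n. lp_norm p ?I (x l) powr p)) ?I"
    using x p by (intro has_sum_sum) (auto simp: lp_space_def lp_norm_powr)
  then have h_sum: "(h has_sum C powr p * (\<Sum>l<n. lp_norm p ?I (x l) powr p)) ?I"
    unfolding h_def by (rule has_sum_cmult_right)
  have h_nonneg: "0 \<le> h t" for t
    by (simp add: h_def sum_nonneg)
  have g_nonneg: "0 \<le> g k t" for k t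
    by (simp add: g_def)
  have G_blocks: "(\<Sum>i<m. \<Sum>k<n. g k (m, y, i)) \<le> (\<Sum>i<m. h (m, y, i))" if "(m, y) \<in> B" for m y
    using blocks[OF that] by (simp add: g_def h_def sum_distrib_left sum.swap[of _ "{..<m}"])
  have G_nonneg: "0 \<le> (\<Sum>k<n. g k t)" for t
    by (simp add: g_nonneg sum_nonneg)
  have "h summable_on ?I"
    using h_sum by (auto simp: summable_on_def)
  note G = summable_on_block_index_le[OF G_nonneg h_nonneg this G_blocks]
  have g_summable: "g k summable_on ?I" if "k < n" for k
  proof (rule summable_on_block_index_le(1)[OF g_nonneg G_nonneg G(1)])
    show "(\<Sum>i<m. g k (m, y, i)) \<le> (\<Sum>i<m. \<Sum>k<n. g k (m, y, i))" for m y
      using that g_nonneg by (intro sum_mono member_le_sum) auto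
  qed
  then show "\<forall>k<n. V k \<in> lp_space p ?I"
    using V_outside by (auto simp: lp_space_def g_def[abs_def])
  have "(\<Sum>k<n. lp_norm p ?I (V k) powr p) = infsum (\<lambda>t. \<Sum>k<n. g k t) ?I"
    using g_summable p
    by (intro infsumI[symmetric] has_sum_sum) (auto simp: g_def[abs_def] lp_norm_powr)
  also have "\<dots> \<le> C powr p * (\<Sum>l<n. lp_norm p ?I (x l) powr p)"
    using G(2) h_sum by (simp add: infsumI)
  finally show "(\<Sum>k<n. lp_norm p ?I (V k) powr p) \<le> C powr p * (\<Sum>l<n. lp_norm p ?I (x l) powr p)" .
qed

definition block_vector :: "nat \<Rightarrow> 'b \<Rightarrow> (nat \<Rightarrow> complex) \<Rightarrow> nat \<times> 'b \<times> nat \<Rightarrow> complex" where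
  "block_vector m y z = (\<lambda>(m', y', j). if m' = m \<and> y' = y \<and> j < m then z j else 0)"

lemma sum_block_vector: "(\<lambda>t. \<Sum>l\<in>L. block_vector m y (z l) t) = block_vector m y (\<lambda>j. \<Sum>l\<in>L. z l j)"
  by (auto simp: block_vector_def fun_eq_iff)

lemma block_vector_lp:
  assumes p: "0 < p" and B: "(m, y) \<in> B"
  shows "block_vector m y z \<in> lp_space p (block_index B)"
    and "lp_norm p (block_index B) (block_vector m y z) powr p = (\<Sum>j<m. cmod (z j) powr p)"
proof -
  have block: "block_index {(m, y)} \<subseteq> block_index B"
    using B by (intro block_index_mono) simp
  have outside: "block_vector m y z t = 0" if "t \<notin> block_index {(m, y)}" for t
    using that by (auto simp: block_vector_def block_index_def split: prod.splits)
  have "(\<Sum>t\<in>block_index {(m, y)}. cmod (block_vector m y z t) powr p) = (\<Sum>j<m. cmod (z j) powr p)"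
    by (simp add: sum_block_index block_vector_def)
  then have "((\<lambda>t. cmod (block_vector m y z t) powr p) has_sum (\<Sum>j<m. cmod (z j) powr p))
      (block_index B)"
    using outside p by (intro has_sum_finite_neutralI[OF sum_block_index(1) block]) auto
  then show "block_vector m y z \<in> lp_space p (block_index B)"
      "lp_norm p (block_index B) (block_vector m y z) powr p = (\<Sum>j<m. cmod (z j) powr p)"
    using outside block p by (auto simp: lp_space_def lp_norm_powr has_sum_iff)
qed

section \<open>The embedding\<close>

definition dual_embedding :: "(nat \<Rightarrow> (nat \<Rightarrow> nat \<Rightarrow> 'a::zero) \<Rightarrow> real) \<Rightarrow> ('a \<Rightarrow> complex)
    \<Rightarrow> ('a idx \<Rightarrow> complex) \<Rightarrow> 'a idx \<Rightarrow> complex" where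
  "dual_embedding N \<mu> x =
     (\<lambda>(m, y, i). if (m, y) \<in> unit_balls N \<and> i < m then \<Sum>j<m. \<mu> (y i j) * x (m, y, j) else 0)"

lemma dual_embedding_outside: "t \<notin> block_index (unit_balls N) \<Longrightarrow> dual_embedding N \<mu> x t = 0"
  by (auto simp: dual_embedding_def block_index_def split: if_splits)

lemma dual_embedding_block:
  "(m, y) \<in> unit_balls N \<Longrightarrow> i < m \<Longrightarrow> dual_embedding N \<mu> x (m, y, i) = (\<Sum>j<m. \<mu> (y i j) * x (m, y, j))"
  by (simp add: dual_embedding_def)

lemma dual_embedding_linear:
  "dual_embedding N (\<lambda>y. a * \<mu> y + b * \<nu> y) x
     = (\<lambda>t. a * dual_embedding N \<mu> x t + b * dual_embedding N \<nu> x t)"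
  by (auto simp: fun_eq_iff dual_embedding_def sum_distrib_left sum.distrib ring_distribs ac_simps)

lemma dual_embedding_add:
  "dual_embedding N \<mu> (\<lambda>t. x t + y t) = (\<lambda>t. dual_embedding N \<mu> x t + dual_embedding N \<mu> y t)"
  by (auto simp: fun_eq_iff dual_embedding_def sum.distrib ring_distribs)

lemma dual_embedding_cmult: "dual_embedding N \<mu> (\<lambda>t. c * x t) = (\<lambda>t. c * dual_embedding N \<mu> x t)"
  by (auto simp: fun_eq_iff dual_embedding_def sum_distrib_left ac_simps)

lemma dual_embedding_block_vector:
  assumes "(m, y) \<in> unit_balls N"
  shows "dual_embedding N \<mu> (block_vector m y z) = block_vector m y (\<lambda>i. \<Sum>j<m. \<mu> (y i j) * z j)"
proof
  fix t :: "'a idx"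
  obtain m' y' i where t: "t = (m', y', i)"
    by (cases t)
  show "dual_embedding N \<mu> (block_vector m y z) t = block_vector m y (\<lambda>i. \<Sum>j<m. \<mu> (y i j) * z j) t"
    using assms by (cases "m' = m \<and> y' = y") (auto simp: t dual_embedding_def block_vector_def)
qed

lemma dual_embedding_amplification_le:
  fixes smul :: "complex \<Rightarrow> 'a::banach \<Rightarrow> 'a" and \<mu> :: "nat \<Rightarrow> nat \<Rightarrow> 'a \<Rightarrow> complex"
    and x :: "nat \<Rightarrow> 'a idx \<Rightarrow> complex"
  assumes p: "1 < p" and X: "p_operator_space p smul N"
    and \<mu>: "\<forall>k<n. \<forall>l<n. \<mu> k l \<in> dual_space smul"
    and x: "\<forall>l<n. x l \<in> lp_space p (block_index (unit_balls N))"
  defines "V \<equiv> \<lambda>k t. \<Sum>l<n. dual_embedding N (\<mu> k l) (x l) t"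
  shows "\<forall>k<n. V k \<in> lp_space p (block_index (unit_balls N))"
    and "(\<Sum>k<n. lp_norm p (block_index (unit_balls N)) (V k) powr p)
           \<le> dual_mnorm p N n \<mu> powr p
              * (\<Sum>l<n. lp_norm p (block_index (unit_balls N)) (x l) powr p)"
proof -
  have "(\<Sum>k<n. \<Sum>i<m. cmod (V k (m, y, i)) powr p)
      \<le> dual_mnorm p N n \<mu> powr p * (\<Sum>l<n. \<Sum>j<m. cmod (x l (m, y, j)) powr p)"
    if "(m, y) \<in> unit_balls N" for m y
  proof -
    have "V k (m, y, i) = (\<Sum>l<n. \<Sum>j<m. \<mu> k l (y i j) * x l (m, y, j))" if "i < m" for k i
      using \<open>(m, y) \<in> unit_balls N\<close> that by (simp add: V_def dual_embedding_block)
    then show ?thesis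
      using pairing_matrix_action_le[OF p X \<mu> that, of "\<lambda>l j. x l (m, y, j)"] by simp
  qed
  from lp_block_diagonal_bound[OF _ dual_mnorm_nonneg[OF p X \<mu>] x _ this]
  show "\<forall>k<n. V k \<in> lp_space p (block_index (unit_balls N))"
    and "(\<Sum>k<n. lp_norm p (block_index (unit_balls N)) (V k) powr p)
           \<le> dual_mnorm p N n \<mu> powr p
              * (\<Sum>l<n. lp_norm p (block_index (unit_balls N)) (x l) powr p)"
    using p by (simp_all add: V_def dual_embedding_outside)
qed

lemma bounded_op_dual_embedding:
  fixes smul :: "complex \<Rightarrow> 'a::banach \<Rightarrow> 'a"
  assumes p: "1 < p" and X: "p_operator_space p smul N" and \<mu>: "\<mu> \<in> dual_space smul"
  shows "bounded_op p (block_index (unit_balls N)) (dual_embedding N \<mu>)"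
proof -
  let ?I = "block_index (unit_balls N)" and ?S = "dual_mnorm p N 1 (\<lambda>_ _. \<mu>)"
  have \<mu>1: "\<forall>k<1. \<forall>l<1. (\<lambda>_ _. \<mu>) k l \<in> dual_space smul"
    using \<mu> by simp
  have "dual_embedding N \<mu> x \<in> lp_space p ?I \<and>
      lp_norm p ?I (dual_embedding N \<mu> x) \<le> ?S * lp_norm p ?I x"
    if "x \<in> lp_space p ?I" for x
  proof -
    from dual_embedding_amplification_le[OF p X \<mu>1, of "\<lambda>_. x"] that
    have "dual_embedding N \<mu> x \<in> lp_space p ?I"
      "lp_norm p ?I (dual_embedding N \<mu> x) powr p \<le> (?S * lp_norm p ?I x) powr p"
      using dual_mnorm_nonneg[OF p X \<mu>1] by (simp_all add: powr_mult lp_norm_nonneg)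
    then show ?thesis
      using p dual_mnorm_nonneg[OF p X \<mu>1] by (simp add: powr_mono2_iff lp_norm_nonneg)
  qed
  then show ?thesis
    unfolding bounded_op_def by (auto simp: dual_embedding_add dual_embedding_cmult)
qed

lemma dual_embedding_amplification_norm_le:
  fixes smul :: "complex \<Rightarrow> 'a::banach \<Rightarrow> 'a" and \<mu> :: "nat \<Rightarrow> nat \<Rightarrow> 'a \<Rightarrow> complex"
    and x :: "nat \<Rightarrow> 'a idx \<Rightarrow> complex"
  assumes p: "1 < p" and X: "p_operator_space p smul N"
    and \<mu>: "\<forall>k<n. \<forall>l<n. \<mu> k l \<in> dual_space smul"
    and x: "\<forall>l<n. x l \<in> lp_space p (block_index (unit_balls N))"
    and x_norm: "(\<Sum>l<n. lp_norm p (block_index (unit_balls N)) (x l) powr p) powr (1 / p) \<le> 1"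
  shows "(\<Sum>k<n. lp_norm p (block_index (unit_balls N))
            (\<lambda>t. \<Sum>l<n. dual_embedding N (\<mu> k l) (x l) t) powr p) powr (1 / p)
           \<le> dual_mnorm p N n \<mu>"
proof -
  let ?I = "block_index (unit_balls N)" and ?S = "dual_mnorm p N n \<mu>"
  have S: "0 \<le> ?S"
    by (rule dual_mnorm_nonneg[OF p X \<mu>])
  have "(\<Sum>l<n. lp_norm p ?I (x l) powr p) \<le> 1"
    using x_norm p by (simp add: powr_inverse_le_one_iff sum_nonneg)
  then have "(\<Sum>k<n. lp_norm p ?I (\<lambda>t. \<Sum>l<n. dual_embedding N (\<mu> k l) (x l) t) powr p) \<le> ?S powr p"
    using dual_embedding_amplification_le(2)[OF p X \<mu> x] S
    by (meson mult_left_le order_trans powr_ge_zero)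
  then have "(\<Sum>k<n. lp_norm p ?I (\<lambda>t. \<Sum>l<n. dual_embedding N (\<mu> k l) (x l) t) powr p) powr (1 / p)
      \<le> (?S powr p) powr (1 / p)"
    using p by (intro powr_mono2) (auto simp: sum_nonneg)
  then show ?thesis
    using S p by (simp add: powr_powr)
qed

lemma dual_embedding_amplification_block_vector:
  fixes \<mu> :: "nat \<Rightarrow> nat \<Rightarrow> 'a::zero \<Rightarrow> complex" and z :: "nat \<times> nat \<Rightarrow> complex"
  assumes p: "0 < p" and block: "(m, y) \<in> unit_balls N"
  defines "x \<equiv> \<lambda>l. block_vector m y (\<lambda>j. z (l, j))"
  shows "x l \<in> lp_space p (block_index (unit_balls N))"
    and "(\<Sum>l<n. lp_norm p (block_index (unit_balls N)) (x l) powr p)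
           = (\<Sum>r\<in>{..<n} \<times> {..<m}. cmod (z r) powr p)"
    and "(\<Sum>k<n. lp_norm p (block_index (unit_balls N))
            (\<lambda>t. \<Sum>l<n. dual_embedding N (\<mu> k l) (x l) t) powr p)
           = pnorm p ({..<n} \<times> {..<m}) (\<lambda>r. \<Sum>s\<in>{..<n} \<times> {..<m}. pairing_matrix \<mu> y r s * z s) powr p"
proof -
  show "x l \<in> lp_space p (block_index (unit_balls N))"
    using p block by (simp add: x_def block_vector_lp)
  show "(\<Sum>l<n. lp_norm p (block_index (unit_balls N)) (x l) powr p)
      = (\<Sum>r\<in>{..<n} \<times> {..<m}. cmod (z r) powr p)"
    using p block by (simp add: x_def block_vector_lp sum.cartesian_product')
  have "(\<lambda>t. \<Sum>l<n. dual_embedding N (\<mu> k l) (x l) t)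
      = block_vector m y (\<lambda>i. \<Sum>l<n. \<Sum>j<m. \<mu> k l (y i j) * z (l, j))" for k
    using block by (simp add: x_def dual_embedding_block_vector sum_block_vector)
  then show "(\<Sum>k<n. lp_norm p (block_index (unit_balls N))
      (\<lambda>t. \<Sum>l<n. dual_embedding N (\<mu> k l) (x l) t) powr p)
      = pnorm p ({..<n} \<times> {..<m}) (\<lambda>r. \<Sum>s\<in>{..<n} \<times> {..<m}. pairing_matrix \<mu> y r s * z s) powr p"
    using p block
    by (simp add: block_vector_lp pnorm_powr pairing_matrix_def sum.cartesian_product')
qed

lemma op_mnorm_dual_embedding:
  fixes smul :: "complex \<Rightarrow> 'a::banach \<Rightarrow> 'a" and \<mu> :: "nat \<Rightarrow> nat \<Rightarrow> 'a \<Rightarrow> complex"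
  assumes p: "1 < p" and X: "p_operator_space p smul N"
    and \<mu>: "\<forall>k<n. \<forall>l<n. \<mu> k l \<in> dual_space smul"
  shows "op_mnorm p (block_index (unit_balls N)) n (\<lambda>k l. dual_embedding N (\<mu> k l))
           = dual_mnorm p N n \<mu>"
proof -
  let ?I = "block_index (unit_balls N)" and ?S = "dual_mnorm p N n \<mu>"
  define Norms where "Norms =
    {(\<Sum>k<n. lp_norm p ?I (\<lambda>t. \<Sum>l<n. dual_embedding N (\<mu> k l) (x l) t) powr p) powr (1 / p) | x.
      (\<forall>l<n. x l \<in> lp_space p ?I) \<and> (\<Sum>l<n. lp_norm p ?I (x l) powr p) powr (1 / p) \<le> 1}"
  have upper: "e \<le> ?S" if "e \<in> Norms" for e
    using that dual_embedding_amplification_norm_le[OF p X \<mu>] by (auto simp: Norms_def)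
  text \<open>Vectors supported on a single block \<open>(m, y)\<close> show that the norm is attained blockwise.\<close>
  have lower: "pnorm p ({..<n} \<times> {..<m}) (\<lambda>r. \<Sum>s\<in>{..<n} \<times> {..<m}. pairing_matrix \<mu> y r s * z s)
      \<in> Norms" if block: "(m, y) \<in> unit_balls N" and z: "pnorm p ({..<n} \<times> {..<m}) z \<le> 1" for m y z
  proof -
    have "0 < p"
      using p by simp
    note x = dual_embedding_amplification_block_vector(1)[OF this block]
      dual_embedding_amplification_block_vector(2)[OF this block, where n = n and z = z]
      dual_embedding_amplification_block_vector(3)[OF this block, where n = n and z = z and \<mu> = \<mu>]
    have "(\<Sum>l<n. lp_norm p ?I (block_vector m y (\<lambda>j. z (l, j))) powr p) powr (1 / p) \<le> 1"
      using p z x(2) by (simp add: powr_inverse_le_one_iff pnorm_le_one_iff sum_nonneg)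
    moreover have "pnorm p ({..<n} \<times> {..<m}) (\<lambda>r. \<Sum>s\<in>{..<n} \<times> {..<m}. pairing_matrix \<mu> y r s * z s)
        = (\<Sum>k<n. lp_norm p ?I
            (\<lambda>t. \<Sum>l<n. dual_embedding N (\<mu> k l) (block_vector m y (\<lambda>j. z (l, j))) t) powr p)
          powr (1 / p)"
      using p x(3) by (simp add: powr_powr pnorm_nonneg)
    ultimately show ?thesis
      using x(1) unfolding Norms_def
      by (auto intro!: exI[of _ "\<lambda>l. block_vector m y (\<lambda>j. z (l, j))"])
  qed
  have zero_block: "(0, \<lambda>i j. 0) \<in> unit_balls N"
    by (rule zero_in_unit_balls[OF X])
  have "Norms \<noteq> {}"
    using lower[OF zero_block, of "\<lambda>_. 0"] by auto
  then have "Sup Norms \<le> ?S"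
    using upper by (rule cSup_least)
  moreover have "?S \<le> Sup Norms"
    unfolding dual_mnorm_pairing_matrix
  proof (rule cSup_least)
    show "{opn p ({..<n} \<times> {..<m}) ({..<n} \<times> {..<m}) (pairing_matrix \<mu> y) | m y.
        (m, y) \<in> unit_balls N} \<noteq> {}"
      using zero_block by blast
    have "bdd_above Norms"
      using upper by (intro bdd_aboveI)
    then show "e \<le> Sup Norms"
      if "e \<in> {opn p ({..<n} \<times> {..<m}) ({..<n} \<times> {..<m}) (pairing_matrix \<mu> y) | m y.
        (m, y) \<in> unit_balls N}" for e
      using that lower by (auto intro!: opn_le cSup_upper)
  qed
  ultimately show ?thesis
    unfolding op_mnorm_def Norms_def by linarith
qed

theorem theorem4p2:
  fixes p :: real and smul :: "complex \<Rightarrow> 'a::banach \<Rightarrow> 'a"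
    and N :: "nat \<Rightarrow> (nat \<Rightarrow> nat \<Rightarrow> 'a) \<Rightarrow> real"
  assumes "1 < p" and "p_operator_space p smul N"
  shows "\<exists>(I :: 'a idx set) (\<Phi> :: ('a \<Rightarrow> complex) \<Rightarrow> ('a idx \<Rightarrow> complex) \<Rightarrow> ('a idx \<Rightarrow> complex)).
           (\<forall>\<mu>\<in>dual_space smul. bounded_op p I (\<Phi> \<mu>)) \<and>
           (\<forall>\<mu>\<in>dual_space smul. \<forall>\<nu>\<in>dual_space smul. \<forall>a b. \<forall>x\<in>lp_space p I.
              \<Phi> (\<lambda>y. a * \<mu> y + b * \<nu> y) x = (\<lambda>i. a * \<Phi> \<mu> x i + b * \<Phi> \<nu> x i)) \<and>
           (\<forall>n \<mu>. (\<forall>k<n. \<forall>l<n. \<mu> k l \<in> dual_space smul) \<longrightarrow>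
              op_mnorm p I n (\<lambda>k l. \<Phi> (\<mu> k l)) = dual_mnorm p N n \<mu>)"
proof (intro exI[of _ "block_index (unit_balls N)"] exI[of _ "dual_embedding N"]
    conjI ballI allI impI)
  show "bounded_op p (block_index (unit_balls N)) (dual_embedding N \<mu>)"
    if "\<mu> \<in> dual_space smul" for \<mu>
    using bounded_op_dual_embedding[OF assms that] .
  show "dual_embedding N (\<lambda>y. a * \<mu> y + b * \<nu> y) x
      = (\<lambda>i. a * dual_embedding N \<mu> x i + b * dual_embedding N \<nu> x i)" for \<mu> \<nu> a b x
    by (rule dual_embedding_linear)
  show "op_mnorm p (block_index (unit_balls N)) n (\<lambda>k l. dual_embedding N (\<mu> k l))
      = dual_mnorm p N n \<mu>"
    if "\<forall>k<n. \<forall>l<n. \<mu> k l \<in> dual_space smul" for n and \<mu> :: "nat \<Rightarrow> nat \<Rightarrow> 'a \<Rightarrow> complex"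
    using op_mnorm_dual_embedding[OF assms that] .
qed

end
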